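(* Let $a$ and $b$ be relatively prime integers with $0<a<b$, and let $n=a+b$. Let $\pi$ be the permutation of $\{1,\ldots,n\}$ defined as follows: if $a=1$, $\pi=(2,3,\ldots,b+1,1)$; if $a\ge 2$, $\pi_i$ is the unique element of $\{1,\ldots,n\}$ with $\pi_i\equiv 1+(i-1)a \pmod{a+b}$, for $i=1,\ldots,n$. Let $a'\in\{1,\ldots,a+b-1\}$ be the inverse of $a$ modulo $a+b$, and let $b'=a+b-a'$. Then $(a',-b')$ is a $D$-pair corresponding to the permutation $\pi^{-1}$, i.e. the set of values $\{\pi^{-1}_{j+1}-\pi^{-1}_j : 1\le j\le n-1\}$ equals $\{a',-b'\}$.
   Context: A pair $(p,q)$ of distinct integers is a $D$-pair corresponding to a permutation $\sigma$ of $\{1,\ldots,n\}$ if the set of discrete derivative values $\{\sigma_{i+1}-\sigma_i : 1\le i\le n-1\}$ equals $\{p,q\}$. Here $\pi^{-1}$ denotes the inverse permutation, written as the sequence $(\pi^{-1}_1,\ldots,\pi^{-1}_n)$. *)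

theory Defs
  imports "HOL-Number_Theory.Cong"
begin

definition D_pair :: "int \<Rightarrow> int \<Rightarrow> (int \<Rightarrow> int) \<Rightarrow> int \<Rightarrow> bool" where
  "D_pair p q \<sigma> n \<longleftrightarrow> p \<noteq> q \<and> {\<sigma> (i + 1) - \<sigma> i | i. 1 \<le> i \<and> i \<le> n - 1} = {p, q}"

definition pi_perm :: "int \<Rightarrow> int \<Rightarrow> int \<Rightarrow> int" where
  "pi_perm a b i =
     (if a = 1 then (if i \<le> b then i + 1 else 1)
      else (THE x. x \<in> {1..a+b} \<and> [x = 1 + (i - 1) * a] (mod (a + b))))"

definition inv_mod :: "int \<Rightarrow> int \<Rightarrow> int" where
  "inv_mod a n = (THE a'. a' \<in> {1..n-1} \<and> [a * a' = 1] (mod n))"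

end

theory Submission
  imports Defs "HOL-Number_Theory.Modular_Inverse"
begin

(* In both cases \<pi> is an affine map i \<mapsto> 1 + (s + (i - 1) a) mod n, with offset s = 1 for the
   rotation used when a = 1 and s = 0 otherwise.  Hence \<pi>\<inverse> is the affine map
   j \<mapsto> 1 + ((j - 1 - s) a') mod n, and consecutive values of \<pi>\<inverse> differ by a' when the residue
   does not wrap around n and by a' - n when it does.  The step from j = 1 + s starts at residue 0
   and does not wrap; the step from j \<equiv> 1 + s - a starts at residue -a a' \<equiv> -1 and wraps, and this
   j is not n as long as a \<noteq> s + 1 (mod n). *)

lemma ex1_modular_inverse_in_range:
  fixes a n :: int
  assumes "coprime a n" and "2 \<le> n"
  shows "\<exists>!a'. a' \<in> {1..n-1} \<and> [a * a' = 1] (mod n)"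
proof (rule ex1I)
  have inverse: "[a * modular_inverse n a = 1] (mod n)"
    using assms(1) by (rule cong_modular_inverse1)
  with assms(2) have "modular_inverse n a \<noteq> 0"
    by (auto simp: cong_def)
  with inverse show "modular_inverse n a \<in> {1..n-1} \<and> [a * modular_inverse n a = 1] (mod n)"
    using modular_inverse_int_nonneg[of n a] modular_inverse_int_less[of n a] assms(2) by auto
next
  fix z assume "z \<in> {1..n-1} \<and> [a * z = 1] (mod n)"
  then show "z = modular_inverse n a"
    using modular_inverse_int_eqI[of z n a] by auto
qed

lemma one_plus_mod_in_interval:
  fixes r n :: int
  assumes "0 < n"
  shows "1 + r mod n \<in> {1..n}"
  using pos_mod_sign[OF assms, of r] pos_mod_bound[OF assms, of r] by simp

lemma one_plus_mod_eq_of_cong: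
  fixes r k n :: int
  assumes "k \<in> {1..n}" and "[r = k - 1] (mod n)"
  shows "1 + r mod n = k"
  using assms by (simp add: cong_def)

lemma the_cong_in_interval:
  fixes y n :: int
  assumes "0 < n"
  shows "(THE x. x \<in> {1..n} \<and> [x = y] (mod n)) = 1 + (y - 1) mod n"
proof (rule the_equality)
  show "1 + (y - 1) mod n \<in> {1..n} \<and> [1 + (y - 1) mod n = y] (mod n)"
    using one_plus_mod_in_interval[OF assms] by (simp add: cong_def mod_add_right_eq)
next
  fix x assume "x \<in> {1..n} \<and> [x = y] (mod n)"
  then show "x = 1 + (y - 1) mod n"
    by (intro one_plus_mod_eq_of_cong[symmetric]) (auto intro: cong_diff cong_sym)
qed

lemma mod_add_diff_mod:
  fixes x d n :: int
  assumes "0 < d" and "d < n"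
  shows "(x + d) mod n - x mod n = (if x mod n + d < n then d else d - n)"
proof -
  have "(x + d) mod n = (x mod n + d) mod n"
    by (simp add: mod_add_left_eq)
  also have "\<dots> = (if x mod n + d < n then x mod n + d else x mod n + d - n)"
  proof (cases "x mod n + d < n")
    case False
    have "(x mod n + d) mod n = (x mod n + d - n + n) mod n"
      by simp
    also have "\<dots> = x mod n + d - n"
      unfolding mod_add_self2 using False assms pos_mod_bound[of n x]
      by (intro mod_pos_pos_trivial) linarith+
    finally show ?thesis
      using False by simp
  qed (use assms in \<open>simp add: mod_pos_pos_trivial\<close>)
  finally show ?thesis
    by simp
qed

lemma inv_into_affine_mod:
  fixes \<pi> :: "int \<Rightarrow> int" and n c c' s j :: int
  assumes "0 < n" and "[c * c' = 1] (mod n)"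
    and \<pi>: "\<And>i. i \<in> {1..n} \<Longrightarrow> \<pi> i = 1 + (s + (i - 1) * c) mod n"
    and "j \<in> {1..n}"
  shows "inv_into {1..n} \<pi> j = 1 + ((j - 1 - s) * c') mod n"
proof -
  define g where "g y = 1 + ((y - 1 - s) * c') mod n" for y
  have g_range: "g y \<in> {1..n}" for y
    unfolding g_def using assms(1) by (rule one_plus_mod_in_interval)
  have "g (\<pi> i) = i" if "i \<in> {1..n}" for i
  proof -
    have "[((s + (i - 1) * c) mod n - s) * c' = (s + (i - 1) * c - s) * c'] (mod n)"
      by (intro cong_mult cong_diff cong_refl) (simp add: cong_def)
    also have "(s + (i - 1) * c - s) * c' = (i - 1) * (c * c')"
      by (simp add: algebra_simps)
    also have "[\<dots> = (i - 1) * 1] (mod n)"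
      by (intro cong_mult cong_refl assms(2))
    finally show ?thesis
      using that by (simp add: g_def \<pi> one_plus_mod_eq_of_cong)
  qed
  then have "inj_on \<pi> {1..n}"
    by (rule inj_on_inverseI)
  moreover have "\<pi> (g j) = j"
  proof -
    have "[s + ((j - 1 - s) * c') mod n * c = s + (j - 1 - s) * (c * c')] (mod n)"
      by (intro cong_add cong_refl) (simp add: cong_def mod_mult_right_eq ac_simps)
    also have "[s + (j - 1 - s) * (c * c') = s + (j - 1 - s) * 1] (mod n)"
      by (intro cong_add cong_mult cong_refl assms(2))
    finally show ?thesis
      using assms(4) g_range by (simp add: g_def \<pi> one_plus_mod_eq_of_cong)
  qed
  ultimately have "inv_into {1..n} \<pi> j = g j"
    using g_range by (intro inv_into_f_eq)
  then show ?thesis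
    by (simp add: g_def)
qed

lemma D_pair_mod_progression:
  fixes \<sigma> :: "int \<Rightarrow> int" and y0 x0 d n i k :: int
  assumes "0 < d" and "d < n"
    and \<sigma>: "\<And>j. j \<in> {1..n} \<Longrightarrow> \<sigma> j = y0 + (x0 + j * d) mod n"
    and "i \<in> {1..n-1}" and "(x0 + i * d) mod n + d < n"
    and "k \<in> {1..n-1}" and "n \<le> (x0 + k * d) mod n + d"
  shows "D_pair d (-(n - d)) \<sigma> n"
proof -
  have step: "\<sigma> (j + 1) - \<sigma> j = (if (x0 + j * d) mod n + d < n then d else -(n - d))"
    if "j \<in> {1..n-1}" for j
    using \<sigma>[of j] \<sigma>[of "j + 1"] mod_add_diff_mod[OF assms(1,2), of "x0 + j * d"] that
    by (simp add: algebra_simps)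
  have "{\<sigma> (j + 1) - \<sigma> j | j. 1 \<le> j \<and> j \<le> n - 1} = {d, -(n - d)}"
  proof (intro equalityI subsetI)
    fix x assume "x \<in> {\<sigma> (j + 1) - \<sigma> j | j. 1 \<le> j \<and> j \<le> n - 1}"
    then obtain j where "j \<in> {1..n-1}" and "x = \<sigma> (j + 1) - \<sigma> j"
      by auto
    then show "x \<in> {d, -(n - d)}"
      using step[of j] by (simp split: if_splits)
  next
    have "d = \<sigma> (i + 1) - \<sigma> i" and "-(n - d) = \<sigma> (k + 1) - \<sigma> k"
      using step[of i] step[of k] assms(4-7) by auto
    moreover have "1 \<le> i" "i \<le> n - 1" "1 \<le> k" "k \<le> n - 1"
      using assms(4,6) by auto
    moreover fix x assume "x \<in> {d, -(n - d)}"
    ultimately show "x \<in> {\<sigma> (j + 1) - \<sigma> j | j. 1 \<le> j \<and> j \<le> n - 1}"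
      by blast
  qed
  moreover have "d \<noteq> -(n - d)"
    using assms(1,2) by simp
  ultimately show ?thesis
    unfolding D_pair_def by blast
qed

lemma D_pair_inv_affine_perm:
  fixes \<pi> :: "int \<Rightarrow> int" and n c c' s :: int
  assumes inverse: "[c * c' = 1] (mod n)" and c': "c' \<in> {1..n-1}"
    and s: "0 \<le> s" "s \<le> n - 2" and not_last: "\<not> [c = s + 1] (mod n)"
    and \<pi>: "\<And>i. i \<in> {1..n} \<Longrightarrow> \<pi> i = 1 + (s + (i - 1) * c) mod n"
  shows "D_pair c' (-(n - c')) (inv_into {1..n} \<pi>) n"
proof -
  have n: "0 < n"
    using c' by simp
  define x0 where "x0 = -(1 + s) * c'"
  define k where "k = 1 + (s - c) mod n"
  have \<sigma>: "inv_into {1..n} \<pi> j = 1 + (x0 + j * c') mod n" if "j \<in> {1..n}" for j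
    using inv_into_affine_mod[OF n inverse \<pi> that] by (simp add: x0_def algebra_simps)
  have "(s - c) mod n \<noteq> n - 1"
  proof
    assume "(s - c) mod n = n - 1"
    then have "[s - c = -1] (mod n)"
      using n by (simp add: cong_def zmod_minus1)
    then have "[c = s + 1] (mod n)"
      by (simp add: cong_iff_dvd_diff dvd_diff_commute algebra_simps)
    with not_last show False ..
  qed
  then have k_range: "k \<in> {1..n-1}"
    using one_plus_mod_in_interval[OF n, of "s - c"] by (auto simp: k_def)
  have "x0 + k * c' = ((s - c) mod n - s) * c'"
    by (simp add: x0_def k_def algebra_simps)
  also have "[((s - c) mod n - s) * c' = ((s - c) - s) * c'] (mod n)"
    by (intro cong_mult cong_diff cong_refl) (simp add: cong_def)
  also have "((s - c) - s) * c' = - (c * c')"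
    by simp
  also have "[\<dots> = -1] (mod n)"
    using inverse by (rule cong_uminus)
  finally have "(x0 + k * c') mod n = n - 1"
    using n by (simp add: cong_def zmod_minus1)
  then have wrap: "n \<le> (x0 + k * c') mod n + c'"
    using c' by simp
  have no_wrap: "(x0 + (1 + s) * c') mod n + c' < n"
    using c' by (simp add: x0_def algebra_simps)
  show ?thesis
    using c' s by (intro D_pair_mod_progression[OF _ _ \<sigma> _ no_wrap k_range wrap]) auto
qed

lemma pi_perm_affine:
  fixes a b i :: int
  assumes "0 < a" and "a < b" and "i \<in> {1..a + b}"
  shows "pi_perm a b i = 1 + ((if a = 1 then 1 else 0) + (i - 1) * a) mod (a + b)"
proof (cases "a = 1")
  case True
  consider "i \<le> b" | "i = b + 1"
    using assms(3) True by force
  then show ?thesis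
    using assms True by cases (auto simp: pi_perm_def mod_pos_pos_trivial)
next
  case False
  have "0 < a + b"
    using assms(1,2) by simp
  then show ?thesis
    unfolding pi_perm_def if_not_P[OF False] the_cong_in_interval[OF \<open>0 < a + b\<close>]
    using False by simp
qed

theorem corollary2p6:
  fixes a b :: int
  assumes "coprime a b" and "0 < a" and "a < b"
  shows "D_pair (inv_mod a (a + b)) (-((a + b) - inv_mod a (a + b)))
           (inv_into {1..a + b} (pi_perm a b)) (a + b)"
proof -
  define n where "n = a + b"
  define s :: int where "s = (if a = 1 then 1 else 0)"
  have n: "3 \<le> n"
    using assms(2,3) by (simp add: n_def)
  have "coprime a n"
    using assms(1) by (simp add: n_def coprime_iff_gcd_eq_1)
  then have "\<exists>!a'. a' \<in> {1..n-1} \<and> [a * a' = 1] (mod n)"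
    using n by (intro ex1_modular_inverse_in_range) simp_all
  then have "inv_mod a n \<in> {1..n-1} \<and> [a * inv_mod a n = 1] (mod n)"
    unfolding inv_mod_def by (rule theI')
  then have a'_range: "inv_mod a n \<in> {1..n-1}" and inverse: "[a * inv_mod a n = 1] (mod n)"
    by auto
  have "\<not> [a = s + 1] (mod n)"
    using assms(2,3) n by (auto simp: s_def n_def cong_def)
  moreover have "pi_perm a b i = 1 + (s + (i - 1) * a) mod n" if "i \<in> {1..n}" for i
    using pi_perm_affine[OF assms(2,3)] that by (simp add: s_def n_def)
  ultimately have "D_pair (inv_mod a n) (-(n - inv_mod a n)) (inv_into {1..n} (pi_perm a b)) n"
    using n by (intro D_pair_inv_affine_perm[OF inverse a'_range]) (auto simp: s_def)
  then show ?thesis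
    by (simp add: n_def)
qed

end
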